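(* Let $k\ge 1$ and $m=k+1$. Consider the instance with jobs $1,\dots,k+1$, all of weight $1$, and machines $1,\dots,m$: each job $j\le k$ has processing time $1$ on machine $1$ and may not be assigned to any other machine; job $k+1$ has processing time $k^2$ on each machine $2,\dots,m$ and may not be assigned to machine $1$. Then every schedule has total completion time at least $k^2+k(k+1)/2>\tfrac32 k^2$, while the optimal value of (CP) on this instance is at most $k^2+k$. Consequently the ratio between the integral optimum and the optimum of (CP) is at least $3/2-O(1/k)$.
   Context: (CP) is the convex program: minimize $z$ subject to $z\ge \tfrac12 c^Tx+\tfrac12 x^TDx$, $z\ge c^Tx$, $\sum_{i}x_{ij}=1$ for all jobs $j$, $x\in[0,1]^{M\times J}$, with $x_{ij}=0$ whenever job $j$ may not be assigned to machine $i$. Here $c^Tx=\sum_i\sum_j w_jp_{ij}x_{ij}$ and $x^TDx=\sum_i\sum_j w_j\big(\sum_{j'\prec_i j}2p_{ij'}x_{ij'}+p_{ij}x_{ij}\big)x_{ij}$, where $\prec_i$ is Smith's order on machine $i$ (non-increasing $w_j/p_{ij}$, ties broken by job index). *)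

theory Defs
  imports Complex_Main
begin

definition smith_prec :: "(nat \<Rightarrow> nat \<Rightarrow> real) \<Rightarrow> (nat \<Rightarrow> real) \<Rightarrow> nat \<Rightarrow> nat \<Rightarrow> nat \<Rightarrow> bool" where
  "smith_prec p w i j' j \<longleftrightarrow>
     w j' / p i j' > w j / p i j \<or> (w j' / p i j' = w j / p i j \<and> j' < j)"

definition cTx :: "nat \<Rightarrow> nat \<Rightarrow> (nat \<Rightarrow> real) \<Rightarrow> (nat \<Rightarrow> nat \<Rightarrow> real) \<Rightarrow> (nat \<Rightarrow> nat \<Rightarrow> real) \<Rightarrow> real" where
  "cTx M J w p x = (\<Sum>i\<in>{1..M}. \<Sum>j\<in>{1..J}. w j * p i j * x i j)"

definition xDx :: "nat \<Rightarrow> nat \<Rightarrow> (nat \<Rightarrow> real) \<Rightarrow> (nat \<Rightarrow> nat \<Rightarrow> real) \<Rightarrow> (nat \<Rightarrow> nat \<Rightarrow> real) \<Rightarrow> real" where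
  "xDx M J w p x = (\<Sum>i\<in>{1..M}. \<Sum>j\<in>{1..J}.
      w j * ((\<Sum>j'\<in>{j'\<in>{1..J}. smith_prec p w i j' j}. 2 * p i j' * x i j') + p i j * x i j) * x i j)"

definition CP_feasible :: "nat \<Rightarrow> nat \<Rightarrow> (nat \<Rightarrow> real) \<Rightarrow> (nat \<Rightarrow> nat \<Rightarrow> real)
     \<Rightarrow> (nat \<Rightarrow> nat \<Rightarrow> bool) \<Rightarrow> (nat \<Rightarrow> nat \<Rightarrow> real) \<Rightarrow> real \<Rightarrow> bool" where
  "CP_feasible M J w p allowed x z \<longleftrightarrow>
     z \<ge> 1/2 * cTx M J w p x + 1/2 * xDx M J w p x \<and>
     z \<ge> cTx M J w p x \<and>
     (\<forall>j\<in>{1..J}. (\<Sum>i\<in>{1..M}. x i j) = 1) \<and>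
     (\<forall>i\<in>{1..M}. \<forall>j\<in>{1..J}. 0 \<le> x i j \<and> x i j \<le> 1) \<and>
     (\<forall>i\<in>{1..M}. \<forall>j\<in>{1..J}. \<not> allowed i j \<longrightarrow> x i j = 0)"

definition CP_value :: "nat \<Rightarrow> nat \<Rightarrow> (nat \<Rightarrow> real) \<Rightarrow> (nat \<Rightarrow> nat \<Rightarrow> real)
     \<Rightarrow> (nat \<Rightarrow> nat \<Rightarrow> bool) \<Rightarrow> real" where
  "CP_value M J w p allowed = Inf {z. \<exists>x. CP_feasible M J w p allowed x z}"

definition valid_schedule :: "nat \<Rightarrow> nat \<Rightarrow> (nat \<Rightarrow> nat \<Rightarrow> real)
     \<Rightarrow> (nat \<Rightarrow> nat \<Rightarrow> bool) \<Rightarrow> (nat \<Rightarrow> nat) \<Rightarrow> (nat \<Rightarrow> real) \<Rightarrow> bool" where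
  "valid_schedule M J p allowed a S \<longleftrightarrow>
     (\<forall>j\<in>{1..J}. a j \<in> {1..M} \<and> allowed (a j) j \<and> 0 \<le> S j) \<and>
     (\<forall>j\<in>{1..J}. \<forall>j'\<in>{1..J}. j \<noteq> j' \<and> a j = a j' \<longrightarrow>
        S j + p (a j) j \<le> S j' \<or> S j' + p (a j') j' \<le> S j)"

definition total_completion :: "nat \<Rightarrow> (nat \<Rightarrow> real) \<Rightarrow> (nat \<Rightarrow> nat \<Rightarrow> real)
     \<Rightarrow> (nat \<Rightarrow> nat) \<Rightarrow> (nat \<Rightarrow> real) \<Rightarrow> real" where
  "total_completion J w p a S = (\<Sum>j\<in>{1..J}. w j * (S j + p (a j) j))"

definition OPT :: "nat \<Rightarrow> nat \<Rightarrow> (nat \<Rightarrow> real) \<Rightarrow> (nat \<Rightarrow> nat \<Rightarrow> real)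
     \<Rightarrow> (nat \<Rightarrow> nat \<Rightarrow> bool) \<Rightarrow> real" where
  "OPT M J w p allowed =
     Inf {total_completion J w p a S | a S. valid_schedule M J p allowed a S}"

text \<open>Jobs j \<le> k: processing time 1, only machine 1. Job k+1: processing time k^2 on
  machines 2..k+1, not on machine 1. (Processing times of forbidden pairs are set to 0;
  they never matter since those x-variables are 0 and such assignments are forbidden.)\<close>
definition gap_w :: "nat \<Rightarrow> real" where "gap_w j = 1"

definition gap_p :: "nat \<Rightarrow> nat \<Rightarrow> nat \<Rightarrow> real" where
  "gap_p k i j = (if j \<le> k then (if i = 1 then 1 else 0)
                   else (if 2 \<le> i then real k ^ 2 else 0))"

definition gap_allowed :: "nat \<Rightarrow> nat \<Rightarrow> nat \<Rightarrow> bool" where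
  "gap_allowed k i j = (if j \<le> k then i = 1 else 2 \<le> i)"

end

theory Submission imports Defs begin

text \<open>In every schedule the k unit jobs run one after another on machine 1, so their
  completion times are at least 1, 2, \<dots>, k, and the big job alone contributes k^2.
  In (CP) every job costs the same on each machine it may use, so the linear term c^T x equals
  k^2 + k on the whole feasible region; spreading the big job evenly over its k machines makes
  the quadratic term x^T D x equal to k^2 + k as well, hence the (CP) optimum is exactly k^2 + k.\<close>

lemma separated_unit_jobs_Max_start:
  fixes S :: "'a \<Rightarrow> real"
  assumes "finite A" "A \<noteq> {}" "\<forall>j\<in>A. 0 \<le> S j"
    and "\<forall>j\<in>A. \<forall>j'\<in>A. j \<noteq> j' \<longrightarrow> S j + 1 \<le> S j' \<or> S j' + 1 \<le> S j"
  shows "real (card A) \<le> Max (S ` A) + 1"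
  using assms
proof (induction "card A" arbitrary: A rule: less_induct)
  case less
  have "Max (S ` A) \<in> S ` A" using less.prems by simp
  then obtain m where m: "m \<in> A" "S m = Max (S ` A)" by auto
  define B where "B = A - {m}"
  have card_A: "card A = card B + 1"
    using card_Suc_Diff1[OF less.prems(1) m(1)] by (simp add: B_def)
  show ?case
  proof (cases "B = {}")
    case True
    then show ?thesis using card_A m less.prems(3) by auto
  next
    case False
    have "real (card B) \<le> Max (S ` B) + 1"
      using less.hyps[of B] less.prems False card_A by (simp add: B_def)
    moreover have "Max (S ` B) + 1 \<le> S m"
    proof -
      have "S j + 1 \<le> S m" if "j \<in> B" for j
      proof -
        have "j \<in> A" "j \<noteq> m" using that by (auto simp: B_def)
        moreover have "S j \<le> S m" using less.prems(1) \<open>j \<in> A\<close> m(2) by simp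
        ultimately show ?thesis using less.prems(4) m(1) by fastforce
      qed
      moreover have "Max (S ` B) \<in> S ` B" using less.prems(1) False by (simp add: B_def)
      ultimately show ?thesis by auto
    qed
    ultimately show ?thesis using card_A m(2) by simp
  qed
qed

lemma separated_unit_jobs_sum_completion:
  fixes S :: "'a \<Rightarrow> real"
  assumes "finite A" "\<forall>j\<in>A. 0 \<le> S j"
    and "\<forall>j\<in>A. \<forall>j'\<in>A. j \<noteq> j' \<longrightarrow> S j + 1 \<le> S j' \<or> S j' + 1 \<le> S j"
  shows "real (card A) * (real (card A) + 1) / 2 \<le> (\<Sum>j\<in>A. S j + 1)"
  using assms
proof (induction "card A" arbitrary: A rule: less_induct)
  case less
  show ?case
  proof (cases "A = {}")
    case False
    have "Max (S ` A) \<in> S ` A" using less.prems(1) False by simp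
    then obtain m where m: "m \<in> A" "S m = Max (S ` A)" by auto
    define B where "B = A - {m}"
    have card_A: "card A = card B + 1"
      using card_Suc_Diff1[OF less.prems(1) m(1)] by (simp add: B_def)
    have "real (card B) * (real (card B) + 1) / 2 \<le> (\<Sum>j\<in>B. S j + 1)"
      using less.hyps[of B] less.prems card_A by (simp add: B_def)
    moreover have "real (card A) \<le> S m + 1"
      using separated_unit_jobs_Max_start[OF less.prems(1) False less.prems(2,3)] m(2) by simp
    moreover have "(\<Sum>j\<in>A. S j + 1) = S m + 1 + (\<Sum>j\<in>B. S j + 1)"
      using less.prems(1) m(1) by (simp add: B_def sum.remove)
    ultimately show ?thesis using card_A by (simp add: field_simps)
  qed simp
qed

definition fractional_assignment ::
    "nat \<Rightarrow> nat \<Rightarrow> (nat \<Rightarrow> nat \<Rightarrow> bool) \<Rightarrow> (nat \<Rightarrow> nat \<Rightarrow> real) \<Rightarrow> bool" where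
  "fractional_assignment M J allowed x \<longleftrightarrow>
     (\<forall>j\<in>{1..J}. (\<Sum>i\<in>{1..M}. x i j) = 1) \<and>
     (\<forall>i\<in>{1..M}. \<forall>j\<in>{1..J}. 0 \<le> x i j \<and> x i j \<le> 1) \<and>
     (\<forall>i\<in>{1..M}. \<forall>j\<in>{1..J}. \<not> allowed i j \<longrightarrow> x i j = 0)"

lemma CP_feasible_iff:
  "CP_feasible M J w p allowed x z \<longleftrightarrow>
     fractional_assignment M J allowed x \<and>
     cTx M J w p x \<le> z \<and> (cTx M J w p x + xDx M J w p x) / 2 \<le> z"
  by (auto simp: CP_feasible_def fractional_assignment_def)

lemma cTx_uniform_job_cost:
  assumes x: "fractional_assignment M J allowed x"
    and cost: "\<And>i j. i \<in> {1..M} \<Longrightarrow> j \<in> {1..J} \<Longrightarrow> allowed i j \<Longrightarrow> w j * p i j = c j"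
  shows "cTx M J w p x = (\<Sum>j\<in>{1..J}. c j)"
proof -
  have "cTx M J w p x = (\<Sum>j\<in>{1..J}. \<Sum>i\<in>{1..M}. w j * p i j * x i j)"
    unfolding cTx_def by (rule sum.swap)
  also have "\<dots> = (\<Sum>j\<in>{1..J}. c j * (\<Sum>i\<in>{1..M}. x i j))"
    unfolding sum_distrib_left
  proof (intro sum.cong refl)
    fix i j assume ij: "i \<in> {1..M}" "j \<in> {1..J}"
    show "w j * p i j * x i j = c j * x i j"
    proof (cases "allowed i j")
      case False
      then show ?thesis using x ij by (simp add: fractional_assignment_def)
    qed (simp add: cost[OF ij])
  qed
  also have "\<dots> = (\<Sum>j\<in>{1..J}. c j)"
    using x by (simp add: fractional_assignment_def)
  finally show ?thesis .
qed

text \<open>If every job costs the same on all machines it may use, the linear part of (CP) is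
  constant on the feasible region, so a fractional assignment whose quadratic part does not
  exceed that constant is optimal.\<close>
lemma CP_value_uniform_job_cost:
  assumes x: "fractional_assignment M J allowed x"
    and cost: "\<And>i j. i \<in> {1..M} \<Longrightarrow> j \<in> {1..J} \<Longrightarrow> allowed i j \<Longrightarrow> w j * p i j = c j"
    and quad: "xDx M J w p x \<le> (\<Sum>j\<in>{1..J}. c j)"
  shows "CP_value M J w p allowed = (\<Sum>j\<in>{1..J}. c j)"
  unfolding CP_value_def
proof (rule cInf_eq_minimum)
  show "(\<Sum>j\<in>{1..J}. c j) \<in> {z. \<exists>x. CP_feasible M J w p allowed x z}"
    using x quad cTx_uniform_job_cost[OF x cost] by (auto simp: CP_feasible_iff)
next
  fix z assume "z \<in> {z. \<exists>x. CP_feasible M J w p allowed x z}"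
  then show "(\<Sum>j\<in>{1..J}. c j) \<le> z"
    using cTx_uniform_job_cost[OF _ cost] by (auto simp: CP_feasible_iff)
qed

lemma gap_schedule_completion_ge:
  assumes v: "valid_schedule (k+1) (k+1) (gap_p k) (gap_allowed k) a S"
  shows "real k ^ 2 + real k * (real k + 1) / 2 \<le> total_completion (k+1) gap_w (gap_p k) a S"
proof -
  have on_first: "\<forall>j\<in>{1..k}. a j = 1" and big_elsewhere: "2 \<le> a (k+1)"
    and start_nonneg: "\<forall>j\<in>{1..k}. 0 \<le> S j" and "0 \<le> S (k+1)"
    using v by (auto simp: valid_schedule_def gap_allowed_def)
  have "\<forall>j\<in>{1..k}. \<forall>j'\<in>{1..k}. j \<noteq> j' \<longrightarrow> S j + 1 \<le> S j' \<or> S j' + 1 \<le> S j"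
    using v on_first unfolding valid_schedule_def by (force simp: gap_p_def)
  then have small: "real k * (real k + 1) / 2 \<le> (\<Sum>j\<in>{1..k}. S j + 1)"
    using separated_unit_jobs_sum_completion[of "{1..k}" S] start_nonneg by simp
  have "total_completion (k+1) gap_w (gap_p k) a S
      = (\<Sum>j\<in>{1..k}. S j + gap_p k (a j) j) + (S (k+1) + gap_p k (a (k+1)) (k+1))"
    by (simp add: total_completion_def gap_w_def)
  also have "\<dots> = (\<Sum>j\<in>{1..k}. S j + 1) + (S (k+1) + real k ^ 2)"
    using on_first big_elsewhere by (simp add: gap_p_def)
  finally show ?thesis using small \<open>0 \<le> S (k+1)\<close> by simp
qed

lemma gap_valid_schedule_exists:
  assumes "k \<ge> 1"
  shows "valid_schedule (k+1) (k+1) (gap_p k) (gap_allowed k)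
     (\<lambda>j. if j \<le> k then 1 else 2) (\<lambda>j. if j \<le> k then real j - 1 else 0)"
  using assms unfolding valid_schedule_def gap_allowed_def gap_p_def
  by (auto simp: le_Suc_eq linorder_neq_iff)

lemma gap_OPT_ge:
  assumes "k \<ge> 1"
  shows "real k ^ 2 + real k * (real k + 1) / 2 \<le> OPT (k+1) (k+1) gap_w (gap_p k) (gap_allowed k)"
  unfolding OPT_def
  using gap_valid_schedule_exists[OF assms] gap_schedule_completion_ge
  by (intro cInf_greatest) blast+

definition gap_job_cost :: "nat \<Rightarrow> nat \<Rightarrow> real" where
  "gap_job_cost k j = (if j \<le> k then 1 else real k ^ 2)"

lemma gap_job_cost_uniform:
  "gap_allowed k i j \<Longrightarrow> gap_w j * gap_p k i j = gap_job_cost k j"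
  by (simp add: gap_allowed_def gap_p_def gap_w_def gap_job_cost_def split: if_splits)

lemma sum_gap_job_cost: "(\<Sum>j\<in>{1..k+1}. gap_job_cost k j) = real k ^ 2 + real k"
  by (simp add: gap_job_cost_def)

definition gap_fractional :: "nat \<Rightarrow> nat \<Rightarrow> nat \<Rightarrow> real" where
  "gap_fractional k i j =
     (if j \<le> k then (if i = 1 then 1 else 0) else (if 2 \<le> i then 1 / real k else 0))"

lemma sum_split_first:
  fixes f :: "nat \<Rightarrow> 'a::comm_monoid_add"
  shows "(\<Sum>i\<in>{1..k+1}. f i) = f 1 + (\<Sum>i\<in>{2..k+1}. f i)"
  using sum.atLeast_Suc_atMost[of 1 "k+1" f] by (simp add: numeral_2_eq_2)

lemma gap_fractional_assignment:
  assumes "k \<ge> 1"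
  shows "fractional_assignment (k+1) (k+1) (gap_allowed k) (gap_fractional k)"
proof -
  have "(\<Sum>i\<in>{1..k+1}. gap_fractional k i j) = 1" for j
  proof (cases "j \<le> k")
    case True
    then show ?thesis unfolding sum_split_first by (simp add: gap_fractional_def)
  next
    case False
    have "(\<Sum>i\<in>{2..k+1}. gap_fractional k i j) = (\<Sum>i\<in>{2..k+1}. 1 / real k)"
      using False by (intro sum.cong) (auto simp: gap_fractional_def)
    then show ?thesis unfolding sum_split_first using False assms by (simp add: gap_fractional_def)
  qed
  then show ?thesis
    using assms by (auto simp: fractional_assignment_def gap_fractional_def gap_allowed_def)
qed

text \<open>Under Smith's rule the unit jobs on machine 1 are ordered by index, so the j-th one
  contributes 2j - 1; the 1/k share of the big job on a machine contributes k^2 (1/k)^2 = 1.\<close>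
lemma gap_fractional_xDx_summand:
  assumes k: "k \<ge> 1" and j: "j \<in> {1..k+1}"
  shows "gap_w j * ((\<Sum>j'\<in>{j'\<in>{1..k+1}. smith_prec (gap_p k) gap_w i j' j}.
            2 * gap_p k i j' * gap_fractional k i j') + gap_p k i j * gap_fractional k i j)
          * gap_fractional k i j
       = (if i = 1 \<and> j \<le> k then 2 * real j - 1 else if 2 \<le> i \<and> j = k+1 then 1 else 0)"
proof (cases "i = 1 \<and> j \<le> k")
  case small_job: True
  have "{j'\<in>{1..k+1}. smith_prec (gap_p k) gap_w i j' j} = {1..<j}"
    using small_job j by (auto simp: smith_prec_def gap_p_def gap_w_def)
  moreover have "(\<Sum>j'\<in>{1..<j}. 2 * gap_p k i j' * gap_fractional k i j') = 2 * (real j - 1)"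
    using small_job j by (simp add: gap_p_def gap_fractional_def of_nat_diff)
  ultimately show ?thesis
    using small_job by (simp add: gap_w_def gap_p_def gap_fractional_def)
next
  case not_small_job: False
  show ?thesis
  proof (cases "2 \<le> i \<and> j = k+1")
    case True
    have "(\<Sum>j'\<in>{j'\<in>{1..k+1}. smith_prec (gap_p k) gap_w i j' j}.
            2 * gap_p k i j' * gap_fractional k i j') = 0"
      using True by (intro sum.neutral) (auto simp: smith_prec_def gap_fractional_def le_Suc_eq)
    then show ?thesis
      using True k by (simp add: gap_w_def gap_p_def gap_fractional_def power2_eq_square)
  next
    case False
    then have "gap_fractional k i j = 0" using not_small_job j by (auto simp: gap_fractional_def)
    then show ?thesis using False not_small_job by auto
  qed
qed

lemma sum_odd_numbers: "(\<Sum>j\<in>{1..k}. 2 * real j - 1) = real k ^ 2"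
  by (induction k) (auto simp: power2_eq_square algebra_simps)

lemma gap_fractional_xDx:
  assumes k: "k \<ge> 1"
  shows "xDx (k+1) (k+1) gap_w (gap_p k) (gap_fractional k) = real k ^ 2 + real k"
proof -
  define t where "t i j = (if i = 1 \<and> j \<le> k then 2 * real j - 1
                          else if 2 \<le> i \<and> j = k+1 then 1 else 0)" for i j :: nat
  have "xDx (k+1) (k+1) gap_w (gap_p k) (gap_fractional k) = (\<Sum>i\<in>{1..k+1}. \<Sum>j\<in>{1..k+1}. t i j)"
    unfolding xDx_def t_def using gap_fractional_xDx_summand[OF k] by simp
  also have "\<dots> = (\<Sum>j\<in>{1..k+1}. t 1 j) + (\<Sum>i\<in>{2..k+1}. \<Sum>j\<in>{1..k+1}. t i j)"
    by (rule sum_split_first)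
  also have "(\<Sum>j\<in>{1..k+1}. t 1 j) = real k ^ 2"
    using sum_odd_numbers[of k] by (simp add: t_def)
  also have "(\<Sum>i\<in>{2..k+1}. \<Sum>j\<in>{1..k+1}. t i j) = (\<Sum>i\<in>{2..k+1}. 1)"
    by (intro sum.cong) (auto simp: t_def)
  finally show ?thesis by simp
qed

lemma gap_CP_value:
  assumes "k \<ge> 1"
  shows "CP_value (k+1) (k+1) gap_w (gap_p k) (gap_allowed k) = real k ^ 2 + real k"
  using CP_value_uniform_job_cost[where c = "gap_job_cost k",
      OF gap_fractional_assignment[OF assms] gap_job_cost_uniform]
    gap_fractional_xDx[OF assms] sum_gap_job_cost[of k]
  by simp

lemma gap_ratio_identity:
  fixes r :: real
  assumes "r \<ge> 1"
  shows "(r ^ 2 + r * (r + 1) / 2) / (r ^ 2 + r) = 3/2 - 1 / (r + 1)"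
proof -
  have "0 < r ^ 2 + r" "0 < r + 1" using assms by (auto intro: add_pos_pos)
  then show ?thesis by (simp add: divide_simps) (simp add: power2_eq_square algebra_simps)
qed

theorem mainTheorem4:
  fixes k :: nat
  assumes "k \<ge> 1"
  shows "(\<forall>a S. valid_schedule (k+1) (k+1) (gap_p k) (gap_allowed k) a S \<longrightarrow>
            total_completion (k+1) gap_w (gap_p k) a S \<ge> real k ^ 2 + real k * (real k + 1) / 2)
       \<and> real k ^ 2 + real k * (real k + 1) / 2 > 3/2 * real k ^ 2
       \<and> CP_value (k+1) (k+1) gap_w (gap_p k) (gap_allowed k) \<le> real k ^ 2 + real k
       \<and> OPT (k+1) (k+1) gap_w (gap_p k) (gap_allowed k)
           / CP_value (k+1) (k+1) gap_w (gap_p k) (gap_allowed k) \<ge> 3/2 - 1 / (real k + 1)"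
proof -
  have k: "real k \<ge> 1" using assms by simp
  have CP: "CP_value (k+1) (k+1) gap_w (gap_p k) (gap_allowed k) = real k ^ 2 + real k"
    by (rule gap_CP_value[OF assms])
  have "3/2 - 1 / (real k + 1)
      = (real k ^ 2 + real k * (real k + 1) / 2) / (real k ^ 2 + real k)"
    using gap_ratio_identity[OF k] by simp
  also have "\<dots> \<le> OPT (k+1) (k+1) gap_w (gap_p k) (gap_allowed k) / (real k ^ 2 + real k)"
    using gap_OPT_ge[OF assms] k by (intro divide_right_mono) auto
  finally have ratio: "3/2 - 1 / (real k + 1)
      \<le> OPT (k+1) (k+1) gap_w (gap_p k) (gap_allowed k)
         / CP_value (k+1) (k+1) gap_w (gap_p k) (gap_allowed k)"
    unfolding CP .
  have "3/2 * real k ^ 2 < real k ^ 2 + real k * (real k + 1) / 2"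
    using k by (simp add: power2_eq_square field_simps)
  then show ?thesis
    using gap_schedule_completion_ge CP ratio by simp
qed

end
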